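(* Let $\varphi(z)=\dfrac{1+z}{\cos z}$. A function $f\in\mathcal{A}$ belongs to $\mathcal{S}^*_{nc}$ if and only if $$\frac1z\left[f(z)*\frac{z-\varphi(e^{i\theta})(z-z^2)}{(1-z)^2}\right]\ne0\qquad\text{for all } z\in\mathbb{D},\ \theta\in[-\pi,\pi].$$
   Context: $\mathbb{D}$ is the open unit disk. $\mathcal{A}$ is the class of analytic $f$ on $\mathbb{D}$ with $f(0)=0$, $f'(0)=1$. For analytic $f,g$ on $\mathbb{D}$, $f\prec g$ means $f=g\circ\omega$ for some analytic $\omega:\mathbb{D}\to\mathbb{D}$ with $\omega(0)=0$. $\mathcal{S}^*_{nc}=\{f\in\mathcal{A}: zf'(z)/f(z)\prec (1+z)/\cos z\}$. For $f(z)=\sum a_nz^n$ and $g(z)=\sum b_nz^n$ analytic in $\mathbb{D}$, $f*g$ denotes the Hadamard product (convolution) $(f*g)(z)=\sum a_nb_nz^n$; the expression $\frac1z[\cdots]$ is understood at $z=0$ by its analytic extension. *)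

theory Defs
  imports "HOL-Complex_Analysis.Complex_Analysis"
begin

definition classA :: "(complex \<Rightarrow> complex) set" where
  "classA = {f. f holomorphic_on ball 0 1 \<and> f 0 = 0 \<and> deriv f 0 = 1}"

definition subord :: "(complex \<Rightarrow> complex) \<Rightarrow> (complex \<Rightarrow> complex) \<Rightarrow> bool" where
  "subord f g \<longleftrightarrow> (\<exists>\<omega>. \<omega> holomorphic_on ball 0 1 \<and> \<omega> ` ball 0 1 \<subseteq> ball 0 1 \<and> \<omega> 0 = 0
      \<and> (\<forall>z\<in>ball 0 1. f z = g (\<omega> z)))"

definition phi_nc :: "complex \<Rightarrow> complex" where
  "phi_nc z = (1 + z) / cos z"

definition logderiv_quot :: "(complex \<Rightarrow> complex) \<Rightarrow> complex \<Rightarrow> complex" where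
  "logderiv_quot f z = (if z = 0 then 1 else z * deriv f z / f z)"

definition S_star_nc :: "(complex \<Rightarrow> complex) set" where
  "S_star_nc = {f. f \<in> classA \<and> subord (logderiv_quot f) phi_nc}"

definition tcoeff :: "(complex \<Rightarrow> complex) \<Rightarrow> nat \<Rightarrow> complex" where
  "tcoeff f n = (deriv ^^ n) f 0 / fact n"

definition hadamard :: "(complex \<Rightarrow> complex) \<Rightarrow> (complex \<Rightarrow> complex) \<Rightarrow> complex \<Rightarrow> complex" where
  "hadamard f g z = (\<Sum>n. tcoeff f n * tcoeff g n * z ^ n)"

text \<open>(1/z) h(z), understood at z = 0 by its analytic extension (value h'(0), as h(0)=0 here).\<close>
definition div_z :: "(complex \<Rightarrow> complex) \<Rightarrow> complex \<Rightarrow> complex" where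
  "div_z h z = (if z = 0 then deriv h 0 else h z / z)"

end

(*
  Hadamard product with the kernel turns f into z f'(z) - c f(z), so the condition says that
  f'(z) differs from phi(w) f(z)/z for every z in the disc D and every w on the unit circle.
  The function phi is univalent on the closed disc: Re phi' > 0 there (Noshiro-Warschawski).
  This positivity is verified on the circle by interval arithmetic with Taylor enclosures of
  cos, sin, cosh and sinh, and extends to the disc by the minimum principle.  For a univalent
  phi, a quotient q = f'/(f/z) is subordinate to phi exactly when q omits the boundary curve
  phi(circle): by compactness of phi(closed disc) and openness of phi(D), the set of z with
  q(z) in phi(D) is then open and closed in D, hence all of D.
*)
theory Submission
  imports Defs "HOL-Library.Interval"
begin

section \<open>An interval certificate for Re phi' > 0 on the unit circle\<close>

lemma lower_Ivl [simp]: "lower (Ivl a b) = min a b"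
  by (simp add: lower.rep_eq Ivl.rep_eq)

lemma upper_Ivl [simp]: "upper (Ivl a b) = b"
  by (simp add: upper.rep_eq Ivl.rep_eq)

lemma lower_times_min:
  "lower (A * B) = min (lower A * lower B) (min (lower A * upper B) (min (upper A * lower B) (upper A * upper B)))"
  for A B :: "real interval"
  by (simp add: lower_times upper_times min.assoc max.assoc)

lemma upper_times_max:
  "upper (A * B) = max (lower A * lower B) (max (lower A * upper B) (max (upper A * lower B) (upper A * upper B)))"
  for A B :: "real interval"
  by (simp add: lower_times upper_times min.assoc max.assoc)

lemma one_in_interval_one: "(1::real) \<in>\<^sub>i 1"
  by (simp add: set_of_eq)

lemma plus_Ivl: "a \<le> b \<Longrightarrow> c \<le> d \<Longrightarrow> Ivl a b + Ivl c d = Ivl (a + c) (b + d)"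
  for a b c d :: real
  by (simp add: interval_eq_iff)

lemma minus_Ivl: "a \<le> b \<Longrightarrow> c \<le> d \<Longrightarrow> Ivl a b - Ivl c d = Ivl (a - d) (b - c)"
  for a b c d :: real
  by (simp add: interval_eq_iff)

lemma times_Ivl:
  "Ivl a b * Ivl c d =
     Ivl (min (a*c) (min (a*d) (min (b*c) (b*d)))) (max (a*c) (max (a*d) (max (b*c) (b*d))))"
  if "a \<le> b" "c \<le> d" for a b c d :: real
proof -
  have le: "min (a*c) (min (a*d) (min (b*c) (b*d))) \<le> max (a*c) (max (a*d) (max (b*c) (b*d)))"
    by (simp add: min.coboundedI1 max.coboundedI1)
  show ?thesis
    unfolding interval_eq_iff lower_times_min upper_times_max lower_Ivl upper_Ivl
      min.absorb1[OF that(1)] min.absorb1[OF that(2)] min.absorb1[OF le]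
    by simp
qed

lemma one_Ivl: "(1 :: real interval) = Ivl 1 1"
  by (simp add: interval_eq_iff)

text \<open>
  For z = x + iy, Re phi'(z) |cos z|^4 = nc_poly x y (cos x) (sin x) (cosh y) (sinh y)
  (lemma Re_dphi_nc).  The polynomial is stated generically so that it can also be
  evaluated on intervals.
\<close>
definition nc_poly :: "'a \<Rightarrow> 'a \<Rightarrow> 'a \<Rightarrow> 'a \<Rightarrow> 'a \<Rightarrow> 'a \<Rightarrow> 'a::{one,plus,minus,times}" where
  "nc_poly x y a b hc hs =
     ((a*a + hs*hs) + (1+x)*(a*b) - y*(hc*hs))*(a*hc) - ((1+x)*(hc*hs) + y*(a*b))*(b*hs)"

lemma nc_poly_in_interval:
  fixes x y a b hc hs :: real
  assumes "x \<in>\<^sub>i X" "y \<in>\<^sub>i Y" "a \<in>\<^sub>i A" "b \<in>\<^sub>i B" "hc \<in>\<^sub>i HC" "hs \<in>\<^sub>i HS"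
  shows "nc_poly x y a b hc hs \<in>\<^sub>i nc_poly X Y A B HC HS"
  unfolding nc_poly_def
  by (intro minus_in_intervalI plus_in_intervalI times_in_intervalI assms one_in_interval_one)

definition cos_poly :: "real \<Rightarrow> real" where
  "cos_poly t = 1 + t^2*(-1/2 + t^2*(1/24 - t^2/720))"

definition sin_poly :: "real \<Rightarrow> real" where
  "sin_poly t = t*(1 + t^2*(-1/6 + t^2*(1/120 - t^2/5040)))"

definition exp_poly :: "real \<Rightarrow> real" where
  "exp_poly t = 1 + t*(1 + t*(1/2 + t*(1/6 + t*(1/24 + t*(1/120 + t*(1/720 + t/5040))))))"

lemma lessThan_8_eq: "{..<8::nat} = {0,1,2,3,4,5,6,7}"
  by auto

lemma cos_poly_error: "\<bar>cos t - cos_poly t\<bar> \<le> t^8/40320"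
proof -
  obtain s where s: "cos t = (\<Sum>m<8. cos_coeff m * t ^ m) + (cos (s + 1/2 * real 8 * pi) / fact 8) * t ^ 8"
    using Maclaurin_cos_expansion[of t 8] by blast
  have "(\<Sum>m<8. cos_coeff m * t ^ m) = cos_poly t"
    unfolding lessThan_8_eq
    by (simp add: cos_poly_def cos_coeff_def fact_numeral algebra_simps power2_eq_square power_def)
  moreover have "\<bar>cos (s + 1/2 * real 8 * pi) / fact 8 * t ^ 8\<bar> \<le> 1 / fact 8 * t^8"
    using mult_right_mono[OF abs_cos_le_one, of "t^8" "s + 1/2 * real 8 * pi"]
    by (simp add: abs_mult divide_simps)
  ultimately show ?thesis
    using s by (simp add: fact_numeral)
qed

lemma sin_poly_error: "\<bar>sin t - sin_poly t\<bar> \<le> t^8/40320"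
proof -
  have "(\<Sum>m<8. sin_coeff m * t ^ m) = sin_poly t"
    unfolding lessThan_8_eq
    by (simp add: sin_poly_def sin_coeff_def fact_numeral algebra_simps power2_eq_square power_def)
  then show ?thesis
    using Maclaurin_sin_bound[of t 8] by (simp add: fact_numeral power_abs)
qed

lemma exp_poly_error:
  assumes "\<bar>t\<bar> \<le> 1"
  shows "\<bar>exp t - exp_poly t\<bar> \<le> 3 * t^8/40320"
proof -
  obtain s where s: "\<bar>s\<bar> \<le> \<bar>t\<bar>" "exp t = (\<Sum>m<8. t ^ m / fact m) + (exp s / fact 8) * t ^ 8"
    using Maclaurin_exp_le[of t 8] by blast
  have "(\<Sum>m<8. t ^ m / fact m) = exp_poly t"
    unfolding lessThan_8_eq by (simp add: exp_poly_def fact_numeral algebra_simps power_def)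
  moreover have "exp s \<le> 3"
    using s(1) assms exp_le by (smt (verit) exp_le_cancel_iff)
  then have "\<bar>exp s / fact 8 * t ^ 8\<bar> \<le> 3 / fact 8 * t^8"
    by (auto simp: abs_mult divide_simps intro!: mult_right_mono)
  ultimately show ?thesis
    using s by (simp add: fact_numeral)
qed

definition cosh_poly :: "real \<Rightarrow> real" where
  "cosh_poly t = (exp_poly t + exp_poly (-t)) / 2"

definition sinh_poly :: "real \<Rightarrow> real" where
  "sinh_poly t = (exp_poly t - exp_poly (-t)) / 2"

lemma cosh_poly_error:
  assumes "\<bar>t\<bar> \<le> 1"
  shows "\<bar>cosh t - cosh_poly t\<bar> \<le> 3 * t^8/40320"
proof -
  have "cosh t - cosh_poly t = ((exp t - exp_poly t) + (exp (-t) - exp_poly (-t))) / 2"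
    by (simp add: cosh_def cosh_poly_def field_simps)
  moreover have "\<bar>exp (-t) - exp_poly (-t)\<bar> \<le> 3 * t^8/40320"
    using exp_poly_error[of "-t"] assms by simp
  ultimately show ?thesis
    using exp_poly_error[OF assms] unfolding abs_le_iff by simp
qed

lemma sinh_poly_error:
  assumes "\<bar>t\<bar> \<le> 1"
  shows "\<bar>sinh t - sinh_poly t\<bar> \<le> 3 * t^8/40320"
proof -
  have "sinh t - sinh_poly t = ((exp t - exp_poly t) - (exp (-t) - exp_poly (-t))) / 2"
    by (simp add: sinh_def sinh_poly_def field_simps)
  moreover have "\<bar>exp (-t) - exp_poly (-t)\<bar> \<le> 3 * t^8/40320"
    using exp_poly_error[of "-t"] assms by simp
  ultimately show ?thesis
    using exp_poly_error[OF assms] unfolding abs_le_iff by simp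
qed

definition cos_enclosure :: "real interval \<Rightarrow> real interval \<Rightarrow> bool" where
  "cos_enclosure X C \<longleftrightarrow> upper (abs_interval X) \<le> 1 \<and>
     lower C \<le> cos_poly (upper (abs_interval X)) - upper (abs_interval X)^8/40320 \<and>
     cos_poly (lower (abs_interval X)) + lower (abs_interval X)^8/40320 \<le> upper C"

definition sin_enclosure :: "real interval \<Rightarrow> real interval \<Rightarrow> bool" where
  "sin_enclosure X S \<longleftrightarrow> -1 \<le> lower X \<and> upper X \<le> 1 \<and>
     lower S \<le> sin_poly (lower X) - lower X^8/40320 \<and>
     sin_poly (upper X) + upper X^8/40320 \<le> upper S"

definition circle_ordinate_enclosure :: "real interval \<Rightarrow> real interval \<Rightarrow> bool" where
  "circle_ordinate_enclosure X Y \<longleftrightarrow> 0 \<le> lower Y \<and>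
     lower Y^2 \<le> 1 - upper (abs_interval X)^2 \<and> 1 - lower (abs_interval X)^2 \<le> upper Y^2"

definition cosh_enclosure :: "real interval \<Rightarrow> real interval \<Rightarrow> bool" where
  "cosh_enclosure Y HC \<longleftrightarrow> 0 \<le> lower Y \<and> upper Y \<le> 1 \<and>
     lower HC \<le> cosh_poly (lower Y) - 3 * lower Y^8/40320 \<and>
     cosh_poly (upper Y) + 3 * upper Y^8/40320 \<le> upper HC"

definition sinh_enclosure :: "real interval \<Rightarrow> real interval \<Rightarrow> bool" where
  "sinh_enclosure Y HS \<longleftrightarrow> 0 \<le> lower Y \<and> upper Y \<le> 1 \<and>
     lower HS \<le> sinh_poly (lower Y) - 3 * lower Y^8/40320 \<and>
     sinh_poly (upper Y) + 3 * upper Y^8/40320 \<le> upper HS"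

lemma cos_in_interval:
  assumes x: "x \<in>\<^sub>i X" and "cos_enclosure X C"
  shows "cos x \<in>\<^sub>i C"
proof -
  define l u where "l = lower (abs_interval X)" and "u = upper (abs_interval X)"
  have bounds: "lower C \<le> cos_poly u - u^8/40320" "cos_poly l + l^8/40320 \<le> upper C"
    using assms(2) by (simp_all add: cos_enclosure_def l_def u_def)
  have "\<bar>x\<bar> \<in>\<^sub>i abs_interval X"
    using x by (simp add: set_of_abs_interval)
  then have "0 \<le> l" "l \<le> \<bar>x\<bar>" "\<bar>x\<bar> \<le> u" "u \<le> 1"
    using assms(2) by (auto simp: set_of_eq cos_enclosure_def l_def u_def)
  then have "cos u \<le> cos \<bar>x\<bar>" "cos \<bar>x\<bar> \<le> cos l"
    using pi_gt3 by (intro cos_monotone_0_pi_le; linarith)+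
  then show ?thesis
    using bounds cos_poly_error[of l] cos_poly_error[of u]
    unfolding set_of_eq atLeastAtMost_iff abs_le_iff cos_abs_real by linarith
qed

lemma sin_in_interval:
  assumes x: "x \<in>\<^sub>i X" and "sin_enclosure X S"
  shows "sin x \<in>\<^sub>i S"
proof -
  have "lower X \<le> x" "x \<le> upper X" "-1 \<le> lower X" "upper X \<le> 1"
    using assms by (simp_all add: set_of_eq sin_enclosure_def)
  then have "sin (lower X) \<le> sin x" "sin x \<le> sin (upper X)"
    using pi_gt3 by (intro sin_monotone_2pi_le; linarith)+
  then show ?thesis
    using assms(2) sin_poly_error[of "lower X"] sin_poly_error[of "upper X"]
    unfolding set_of_eq atLeastAtMost_iff abs_le_iff sin_enclosure_def by linarith
qed

lemma circle_ordinate_in_interval: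
  fixes x y :: real
  assumes x: "x \<in>\<^sub>i X" and y: "0 \<le> y" "x^2 + y^2 = 1" and Y: "circle_ordinate_enclosure X Y"
  shows "y \<in>\<^sub>i Y"
proof -
  define l u where "l = lower (abs_interval X)" and "u = upper (abs_interval X)"
  have "\<bar>x\<bar> \<in>\<^sub>i abs_interval X"
    using x by (simp add: set_of_abs_interval)
  then have "0 \<le> l" "l \<le> \<bar>x\<bar>" "\<bar>x\<bar> \<le> u"
    by (simp_all add: set_of_eq l_def u_def)
  then have "l^2 \<le> x^2" "x^2 \<le> u^2"
    using power_mono[of l "\<bar>x\<bar>" 2] power_mono[of "\<bar>x\<bar>" u 2] by simp_all
  moreover have "0 \<le> lower Y" "lower Y^2 \<le> 1 - u^2" "1 - l^2 \<le> upper Y^2"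
    using Y by (simp_all add: circle_ordinate_enclosure_def l_def u_def)
  ultimately have sq: "lower Y^2 \<le> y^2" "y^2 \<le> upper Y^2" "0 \<le> upper Y"
    using y lower_le_upper[of Y] by linarith+
  show ?thesis
    using power2_le_imp_le[OF sq(1) y(1)] power2_le_imp_le[OF sq(2,3)] by (simp add: set_of_eq)
qed

lemma cosh_in_interval:
  assumes y: "y \<in>\<^sub>i Y" and "cosh_enclosure Y HC"
  shows "cosh y \<in>\<^sub>i HC"
proof -
  have Y: "0 \<le> lower Y" "upper Y \<le> 1"
    using assms(2) by (simp_all add: cosh_enclosure_def)
  then have "cosh (lower Y) \<le> cosh y" "cosh y \<le> cosh (upper Y)"
    using y by (auto simp: set_of_eq cosh_real_nonneg_le_iff)
  then show ?thesis
    using Y assms(2) cosh_poly_error[of "lower Y"] cosh_poly_error[of "upper Y"] lower_le_upper[of Y]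
    unfolding set_of_eq atLeastAtMost_iff abs_le_iff cosh_enclosure_def by linarith
qed

lemma sinh_in_interval:
  assumes y: "y \<in>\<^sub>i Y" and "sinh_enclosure Y HS"
  shows "sinh y \<in>\<^sub>i HS"
proof -
  have Y: "0 \<le> lower Y" "upper Y \<le> 1"
    using assms(2) by (simp_all add: sinh_enclosure_def)
  have "sinh (lower Y) \<le> sinh y" "sinh y \<le> sinh (upper Y)"
    using y by (auto simp: set_of_eq)
  then show ?thesis
    using Y assms(2) sinh_poly_error[of "lower Y"] sinh_poly_error[of "upper Y"] lower_le_upper[of Y]
    unfolding set_of_eq atLeastAtMost_iff abs_le_iff sinh_enclosure_def by linarith
qed

definition certified_box ::
    "real interval \<Rightarrow> real interval \<Rightarrow> real interval \<Rightarrow> real interval \<Rightarrow> real interval \<Rightarrow> real interval \<Rightarrow> bool"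
  where "certified_box X Y C S HC HS \<longleftrightarrow>
    cos_enclosure X C \<and> sin_enclosure X S \<and> circle_ordinate_enclosure X Y \<and>
    cosh_enclosure Y HC \<and> sinh_enclosure Y HS \<and> 0 < lower (nc_poly X Y C S HC HS)"

lemma certified_box_nc_poly_pos:
  assumes "certified_box X Y C S HC HS" "x \<in>\<^sub>i X" "0 \<le> y" "x^2 + y^2 = 1"
  shows "0 < nc_poly x y (cos x) (sin x) (cosh y) (sinh y)"
proof -
  have "y \<in>\<^sub>i Y"
    using assms circle_ordinate_in_interval certified_box_def by blast
  then have "nc_poly x y (cos x) (sin x) (cosh y) (sinh y) \<in>\<^sub>i nc_poly X Y C S HC HS"
    using assms unfolding certified_box_def
    by (meson nc_poly_in_interval cos_in_interval sin_in_interval cosh_in_interval sinh_in_interval)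
  then show ?thesis
    using assms(1) by (simp add: certified_box_def set_of_eq)
qed

fun covers :: "real \<Rightarrow> real \<Rightarrow> real interval list \<Rightarrow> bool" where
  "covers a b [] \<longleftrightarrow> False"
| "covers a b (X # Xs) \<longleftrightarrow> lower X \<le> a \<and> (b \<le> upper X \<or> covers (upper X) b Xs)"

lemma covers_imp_in_interval:
  assumes "covers a b Xs" "a \<le> x" "x \<le> b"
  shows "\<exists>X\<in>set Xs. x \<in>\<^sub>i X"
  using assms
proof (induction Xs arbitrary: a)
  case (Cons X Xs)
  show ?case
  proof (cases "x \<le> upper X")
    case True
    then show ?thesis
      using Cons.prems by (auto simp: set_of_eq)
  next
    case False
    then show ?thesis
      using Cons.prems Cons.IH[of "upper X"] by auto
  qed
qed simp

text \<open>
  An entry (X, Y, C, S, HC, HS) bounds x, y = sqrt (1 - x^2), cos x, sin x, cosh y and sinh y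
  for x in X; the ranges X cover [-1, 1].
\<close>
definition nc_boxes ::
    "(real interval \<times> real interval \<times> real interval \<times> real interval \<times> real interval \<times> real interval) list"
  where "nc_boxes =
    [(Ivl (- 1) (- 0.940), Ivl 0 0.342, Ivl 0.540 0.590, Ivl (- 0.842) (- 0.807), Ivl 1 1.060, Ivl 0 0.349),
     (Ivl (- 0.940) (- 0.890), Ivl 0.341 0.456, Ivl 0.589 0.630, Ivl (- 0.808) (- 0.777), Ivl 1.058 1.106, Ivl 0.347 0.472),
     (Ivl (- 0.890) (- 0.840), Ivl 0.455 0.543, Ivl 0.629 0.668, Ivl (- 0.778) (- 0.744), Ivl 1.105 1.152, Ivl 0.470 0.571),
     (Ivl (- 0.840) (- 0.790), Ivl 0.542 0.614, Ivl 0.667 0.704, Ivl (- 0.745) (- 0.710), Ivl 1.150 1.195, Ivl 0.568 0.654),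
     (Ivl (- 0.790) (- 0.730), Ivl 0.613 0.684, Ivl 0.703 0.746, Ivl (- 0.711) (- 0.666), Ivl 1.193 1.244, Ivl 0.652 0.739),
     (Ivl (- 0.730) (- 0.660), Ivl 0.683 0.752, Ivl 0.745 0.790, Ivl (- 0.667) (- 0.613), Ivl 1.242 1.297, Ivl 0.737 0.825),
     (Ivl (- 0.660) (- 0.570), Ivl 0.751 0.822, Ivl 0.789 0.842, Ivl (- 0.614) (- 0.539), Ivl 1.295 1.358, Ivl 0.823 0.918),
     (Ivl (- 0.570) (- 0.450), Ivl 0.821 0.894, Ivl 0.841 0.901, Ivl (- 0.540) (- 0.434), Ivl 1.356 1.427, Ivl 0.916 1.018),
     (Ivl (- 0.450) (- 0.280), Ivl 0.893 0.960, Ivl 0.900 0.962, Ivl (- 0.435) (- 0.276), Ivl 1.425 1.498, Ivl 1.016 1.115),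
     (Ivl (- 0.280) 0.030, Ivl 0.960 1, Ivl 0.961 1, Ivl (- 0.277) 0.030, Ivl 1.497 1.544, Ivl 1.114 1.176),
     (Ivl 0.030 0.220, Ivl 0.975 1, Ivl 0.975 1, Ivl 0.029 0.219, Ivl 1.514 1.544, Ivl 1.136 1.176),
     (Ivl 0.220 0.310, Ivl 0.950 0.976, Ivl 0.952 0.976, Ivl 0.218 0.306, Ivl 1.486 1.516, Ivl 1.099 1.139),
     (Ivl 0.310 0.380, Ivl 0.924 0.951, Ivl 0.928 0.953, Ivl 0.305 0.371, Ivl 1.458 1.488, Ivl 1.061 1.102),
     (Ivl 0.380 0.430, Ivl 0.902 0.925, Ivl 0.908 0.929, Ivl 0.370 0.417, Ivl 1.435 1.460, Ivl 1.029 1.063),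
     (Ivl 0.430 0.470, Ivl 0.882 0.903, Ivl 0.891 0.909, Ivl 0.416 0.453, Ivl 1.414 1.437, Ivl 1 1.031),
     (Ivl 0.470 0.500, Ivl 0.866 0.883, Ivl 0.877 0.892, Ivl 0.452 0.480, Ivl 1.398 1.416, Ivl 0.978 1.003),
     (Ivl 0.500 0.530, Ivl 0.847 0.867, Ivl 0.862 0.878, Ivl 0.479 0.506, Ivl 1.380 1.401, Ivl 0.951 0.980),
     (Ivl 0.530 0.560, Ivl 0.828 0.848, Ivl 0.847 0.863, Ivl 0.505 0.532, Ivl 1.362 1.382, Ivl 0.925 0.954),
     (Ivl 0.560 0.590, Ivl 0.807 0.829, Ivl 0.830 0.848, Ivl 0.531 0.557, Ivl 1.343 1.364, Ivl 0.897 0.928),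
     (Ivl 0.590 0.620, Ivl 0.784 0.808, Ivl 0.813 0.831, Ivl 0.556 0.582, Ivl 1.323 1.345, Ivl 0.866 0.899),
     (Ivl 0.620 0.650, Ivl 0.759 0.785, Ivl 0.796 0.814, Ivl 0.581 0.606, Ivl 1.302 1.325, Ivl 0.833 0.869),
     (Ivl 0.650 0.680, Ivl 0.733 0.760, Ivl 0.777 0.797, Ivl 0.605 0.629, Ivl 1.280 1.303, Ivl 0.800 0.836),
     (Ivl 0.680 0.710, Ivl 0.704 0.734, Ivl 0.758 0.778, Ivl 0.628 0.652, Ivl 1.258 1.282, Ivl 0.763 0.802),
     (Ivl 0.710 0.740, Ivl 0.672 0.705, Ivl 0.738 0.759, Ivl 0.651 0.675, Ivl 1.234 1.259, Ivl 0.723 0.765),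
     (Ivl 0.740 0.780, Ivl 0.625 0.673, Ivl 0.710 0.739, Ivl 0.674 0.704, Ivl 1.201 1.236, Ivl 0.666 0.725),
     (Ivl 0.780 0.820, Ivl 0.572 0.626, Ivl 0.682 0.711, Ivl 0.703 0.732, Ivl 1.168 1.203, Ivl 0.603 0.668),
     (Ivl 0.820 0.880, Ivl 0.474 0.573, Ivl 0.637 0.683, Ivl 0.731 0.771, Ivl 1.114 1.169, Ivl 0.491 0.605),
     (Ivl 0.880 0.960, Ivl 0.279 0.475, Ivl 0.573 0.638, Ivl 0.770 0.820, Ivl 1.039 1.115, Ivl 0.282 0.494),
     (Ivl 0.960 1, Ivl 0 0.280, Ivl 0.540 0.574, Ivl 0.819 0.842, Ivl 1 1.040, Ivl 0 0.284)]"

lemma nc_boxes_certified: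
  "list_all (\<lambda>(X, Y, C, S, HC, HS). certified_box X Y C S HC HS) nc_boxes"
  unfolding nc_boxes_def list.pred_inject prod.case
  by (intro conjI TrueI; simp add: certified_box_def cos_enclosure_def sin_enclosure_def
      circle_ordinate_enclosure_def cosh_enclosure_def sinh_enclosure_def nc_poly_def one_Ivl plus_Ivl minus_Ivl times_Ivl
      cos_poly_def sin_poly_def cosh_poly_def sinh_poly_def exp_poly_def power_divide)

lemma nc_boxes_cover: "covers (-1) 1 (map fst nc_boxes)"
  by (simp add: nc_boxes_def)

lemma nc_poly_pos_upper_circle:
  fixes x y :: real
  assumes "0 \<le> y" "x^2 + y^2 = 1"
  shows "0 < nc_poly x y (cos x) (sin x) (cosh y) (sinh y)"
proof -
  have "x^2 \<le> 1"
    using assms zero_le_power2[of y] by linarith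
  then have "-1 \<le> x" "x \<le> 1"
    by (auto simp: abs_square_le_1 abs_le_iff)
  then obtain X Y C S HC HS where "(X, Y, C, S, HC, HS) \<in> set nc_boxes" "x \<in>\<^sub>i X"
    using covers_imp_in_interval[OF nc_boxes_cover] by fastforce
  then show ?thesis
    using nc_boxes_certified certified_box_nc_poly_pos assms
    by (fastforce simp: list_all_iff)
qed

section \<open>Univalence of phi on the closed disc\<close>

lemma cos_nonzero_if_norm_less_pi_half:
  fixes z :: complex
  assumes "norm z < pi/2"
  shows "cos z \<noteq> 0"
proof
  assume "cos z = 0"
  then obtain n :: int where "z = of_real (n*pi) + of_real pi/2"
    by (auto simp: cos_eq_0)
  then have "z = of_real ((n + 1/2) * pi)"
    by (simp add: algebra_simps)
  then have "norm z = \<bar>n + 1/2\<bar> * pi"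
    by (simp only: norm_of_real abs_mult) simp
  moreover have "\<bar>real_of_int n + 1/2\<bar> \<ge> 1/2"
    by (cases "n \<ge> 0") auto
  ultimately have "pi/2 \<le> norm z"
    using mult_right_mono[of "1/2" "\<bar>real_of_int n + 1/2\<bar>" pi] by simp
  with assms show False
    by simp
qed

lemma phi_nc_0 [simp]: "phi_nc 0 = 1"
  by (simp add: phi_nc_def)

lemma phi_nc_nonzero:
  assumes "norm u < 1"
  shows "phi_nc u \<noteq> 0"
proof -
  have "cos u \<noteq> 0"
    using assms pi_gt3 by (intro cos_nonzero_if_norm_less_pi_half) simp
  moreover have "1 + u \<noteq> 0"
    using assms by (metis add.inverse_unique norm_minus_cancel norm_one less_irrefl)
  ultimately show ?thesis
    by (simp add: phi_nc_def)
qed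

lemma holomorphic_phi_nc: "phi_nc holomorphic_on ball 0 (pi/2)"
  unfolding phi_nc_def[abs_def]
  by (intro holomorphic_intros) (simp add: cos_nonzero_if_norm_less_pi_half)

definition dphi_nc :: "complex \<Rightarrow> complex" where
  "dphi_nc z = (cos z + (1 + z) * sin z) / (cos z)^2"

lemma has_field_derivative_phi_nc:
  assumes "norm z < pi/2"
  shows "(phi_nc has_field_derivative dphi_nc z) (at z)"
proof -
  have "cos z \<noteq> 0"
    by (rule cos_nonzero_if_norm_less_pi_half[OF assms])
  then have "((\<lambda>z. (1 + z) / cos z) has_field_derivative dphi_nc z) (at z)"
    by (auto intro!: derivative_eq_intros simp: dphi_nc_def power2_eq_square algebra_simps)
  then show ?thesis
    unfolding phi_nc_def[abs_def] .
qed

lemma holomorphic_dphi_nc: "dphi_nc holomorphic_on ball 0 (pi/2)"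
  unfolding dphi_nc_def[abs_def]
  by (intro holomorphic_intros) (simp add: cos_nonzero_if_norm_less_pi_half)

lemma Re_dphi_nc:
  assumes "cos z \<noteq> 0"
  shows "Re (dphi_nc z) =
    nc_poly (Re z) (Im z) (cos (Re z)) (sin (Re z)) (cosh (Im z)) (sinh (Im z)) / cmod (cos z)^4"
proof -
  define x y a b hc hs
    where "x = Re z" and "y = Im z" and "a = cos x" and "b = sin x" and "hc = cosh y" and "hs = sinh y"
  have cos_z: "cos z = Complex (a*hc) (-(b*hs))" and sin_z: "sin z = Complex (b*hc) (a*hs)"
    by (simp_all add: complex_eq_iff Re_cos Im_cos Re_sin Im_sin cosh_def sinh_def
        x_def y_def a_def b_def hc_def hs_def field_simps)
  have pythagoras: "a^2 + b^2 = 1" "hc^2 - hs^2 = 1"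
    by (simp_all add: a_def b_def hc_def hs_def cosh_square_eq)
  have "Re ((cos z + (1 + z) * sin z) * cnj (cos z)^2) = nc_poly x y a b hc hs"
  proof -
    have z: "z = Complex x y"
      by (simp add: x_def y_def)
    have "Re ((cos z + (1 + z) * sin z) * cnj (cos z)^2) = nc_poly x y a b hc hs
       + (a^2 + b^2 - 1) * (a*hc*hs^2 - b*hc*hs^2 - b*hc*hs^2*x + a*hs^3*y - 2*a*hc^2*hs*y + a*hs*y)
       + (hc^2 - hs^2 - 1) * (a^3*hc + a^2*b*hc + a^2*b*hc*x + a^3*hs*y - a*hs*y)"
      unfolding cos_z sin_z
      by (subst z) (simp add: nc_poly_def power2_eq_square power3_eq_cube algebra_simps)
    then show ?thesis
      using pythagoras by simp
  qed
  moreover have "dphi_nc z = (cos z + (1 + z) * sin z) * cnj (cos z)^2 / of_real (cmod (cos z)^4)"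
  proof -
    have "of_real (cmod (cos z)^4) = (cos z * cnj (cos z))^2"
      by (metis complex_norm_square mult_2 numeral_Bit0 numeral_One of_real_power power_mult
          power_mult_distrib power2_eq_square)
    then show ?thesis
      using assms by (simp add: dphi_nc_def power_mult_distrib)
  qed
  ultimately show ?thesis
    by (simp add: Re_divide_of_real x_def y_def a_def b_def hc_def hs_def)
qed

lemma nc_poly_conj_symmetric: "nc_poly x (-y) a b hc (-hs) = nc_poly x y a b hc hs"
  for x y a b hc hs :: real
  by (simp add: nc_poly_def algebra_simps)

lemma Re_dphi_nc_pos_sphere:
  assumes "norm z = 1"
  shows "0 < Re (dphi_nc z)"
proof -
  define x y where "x = Re z" and "y = Im z"
  have circle: "x^2 + y^2 = 1"
    using assms by (simp add: x_def y_def norm_complex_def)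
  have "0 < nc_poly x \<bar>y\<bar> (cos x) (sin x) (cosh \<bar>y\<bar>) (sinh \<bar>y\<bar>)"
    using circle by (intro nc_poly_pos_upper_circle) simp_all
  then have "0 < nc_poly x y (cos x) (sin x) (cosh y) (sinh y)"
    by (cases "0 \<le> y") (simp_all add: nc_poly_conj_symmetric)
  moreover have "cos z \<noteq> 0"
    using assms pi_gt3 by (intro cos_nonzero_if_norm_less_pi_half) simp
  ultimately show ?thesis
    by (simp add: Re_dphi_nc x_def y_def)
qed

text \<open>The minimum principle for the harmonic function Re g, via the maximum modulus of exp (- g).\<close>
lemma Re_pos_cball_if_Re_pos_sphere:
  fixes g :: "complex \<Rightarrow> complex"
  assumes holo: "g holomorphic_on ball a r" and cont: "continuous_on (cball a r) g" and "0 < r"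
    and sphere: "\<And>z. z \<in> sphere a r \<Longrightarrow> 0 < Re (g z)"
    and z: "z \<in> cball a r"
  shows "0 < Re (g z)"
proof -
  have "continuous_on (sphere a r) (\<lambda>z. Re (g z))"
    by (intro continuous_intros continuous_on_subset[OF cont]) auto
  moreover have "sphere a r \<noteq> {}"
    using \<open>0 < r\<close> by simp
  ultimately obtain z0 where z0: "z0 \<in> sphere a r" "\<And>w. w \<in> sphere a r \<Longrightarrow> Re (g z0) \<le> Re (g w)"
    using continuous_attains_inf[of "sphere a r" "\<lambda>z. Re (g z)"] by auto
  have "norm (exp (- g z)) \<le> exp (- Re (g z0))"
  proof (rule maximum_modulus_frontier[where f = "\<lambda>z. exp (- g z)" and S = "cball a r"])
    show "(\<lambda>z. exp (- g z)) holomorphic_on interior (cball a r)"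
      using holo by (auto intro!: holomorphic_intros)
    show "continuous_on (closure (cball a r)) (\<lambda>z. exp (- g z))"
      using cont by (auto intro!: continuous_intros)
    show "norm (exp (- g w)) \<le> exp (- Re (g z0))" if "w \<in> frontier (cball a r)" for w
      using z0(2)[of w] that \<open>0 < r\<close> by simp
  qed (use z in auto)
  then have "Re (g z0) \<le> Re (g z)"
    by simp
  with sphere[OF z0(1)] show ?thesis
    by linarith
qed

lemma inj_on_if_Re_deriv_pos:
  fixes g g' :: "complex \<Rightarrow> complex"
  assumes "convex S"
    and deriv: "\<And>z. z \<in> S \<Longrightarrow> (g has_field_derivative g' z) (at z)"
    and pos: "\<And>z. z \<in> S \<Longrightarrow> 0 < Re (g' z)"
  shows "inj_on g S"
proof (rule inj_onI, rule ccontr)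
  fix w1 w2
  assume w: "w1 \<in> S" "w2 \<in> S" "g w1 = g w2" "w1 \<noteq> w2"
  define d where "d = w2 - w1"
  have "d \<noteq> 0"
    using w by (simp add: d_def)
  have segment: "closed_segment w1 w2 \<subseteq> S"
    using w \<open>convex S\<close> by (simp add: closed_segment_subset)
  have "\<exists>u. u \<in> closed_segment w1 w2 \<and>
      Re (g w2 / d) - Re (g w1 / d) = Re (g' u / d * (w2 - w1))"
    using segment \<open>d \<noteq> 0\<close> by (intro complex_mvt_line) (auto intro!: derivative_eq_intros deriv)
  then obtain u where "u \<in> closed_segment w1 w2" "Re (g' u / d * (w2 - w1)) = 0"
    using w(3) by auto
  moreover have "g' u / d * (w2 - w1) = g' u"
    using \<open>d \<noteq> 0\<close> by (simp add: d_def)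
  ultimately show False
    using pos segment by fastforce
qed

lemma cball_subset_ball_pi_half: "cball 0 1 \<subseteq> ball (0::complex) (pi/2)"
  using pi_gt3 by auto

lemma inj_on_phi_nc: "inj_on phi_nc (cball 0 1)"
proof (rule inj_on_if_Re_deriv_pos)
  show "(phi_nc has_field_derivative dphi_nc z) (at z)" if "z \<in> cball 0 1" for z
    using that cball_subset_ball_pi_half by (intro has_field_derivative_phi_nc) auto
  show "0 < Re (dphi_nc z)" if "z \<in> cball 0 1" for z
  proof (rule Re_pos_cball_if_Re_pos_sphere[OF _ _ _ Re_dphi_nc_pos_sphere that])
    show "dphi_nc holomorphic_on ball 0 1"
      by (rule holomorphic_on_subset[OF holomorphic_dphi_nc]) (use cball_subset_ball_pi_half in auto)
    show "continuous_on (cball 0 1) dphi_nc"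
      by (rule holomorphic_on_imp_continuous_on, rule holomorphic_on_subset[OF holomorphic_dphi_nc])
        (use cball_subset_ball_pi_half in auto)
  qed auto
qed (rule convex_cball)

section \<open>Hadamard product with the kernel\<close>

lemma sums_of_nat_times_power:
  fixes z :: "'a::{real_normed_field,banach}"
  assumes "norm z < 1"
  shows "(\<lambda>n. of_nat n * z^n) sums (z / (1 - z)^2)"
proof -
  have "(\<lambda>n. z * (of_nat (Suc n) * z ^ n)) sums (z * (1 / (1 - z)^2))"
    by (rule sums_mult[OF geometric_deriv_sums[OF assms]])
  then have "(\<lambda>n. of_nat (Suc n) * z ^ Suc n) sums (z / (1 - z)^2)"
    by (simp add: algebra_simps)
  then show ?thesis
    by (subst (asm) sums_Suc_iff) simp
qed

lemma sums_power_positive: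
  fixes z :: "'a::{real_normed_field,banach}"
  assumes "norm z < 1"
  shows "(\<lambda>n. if n = 0 then 0 else z^n) sums (z / (1 - z))"
proof -
  have "(\<lambda>n. z * z ^ n) sums (z * (1 / (1 - z)))"
    by (rule sums_mult[OF geometric_sums[OF assms]])
  then have "(\<lambda>n. (\<lambda>n. if n = 0 then 0 else z^n) (Suc n)) sums (z / (1 - z))"
    by simp
  then show ?thesis
    by (subst (asm) sums_Suc_iff) simp
qed

lemma sums_kernel:
  fixes z c :: complex
  assumes "norm z < 1"
  shows "(\<lambda>n. (if n = 0 then 0 else of_nat n - c) * z^n) sums ((z - c * (z - z^2)) / (1 - z)^2)"
proof -
  have "(\<lambda>n. of_nat n * z^n - c * (if n = 0 then 0 else z^n)) sums (z / (1 - z)^2 - c * (z / (1 - z)))"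
    by (intro sums_diff sums_mult sums_of_nat_times_power sums_power_positive assms)
  moreover have "z / (1 - z)^2 - c * (z / (1 - z)) = (z - c * (z - z^2)) / (1 - z)^2"
  proof -
    have "1 - z \<noteq> 0"
      using assms by auto
    then have "c * (z / (1 - z)) = c * z * (1 - z) / (1 - z)^2"
      by (simp add: power2_eq_square)
    then have "z / (1 - z)^2 - c * (z / (1 - z)) = (z - c * z * (1 - z)) / (1 - z)^2"
      by (simp add: diff_divide_distrib)
    then show ?thesis
      by (simp add: algebra_simps power2_eq_square)
  qed
  moreover have "(\<lambda>n. of_nat n * z^n - c * (if n = 0 then 0 else z^n)) =
      (\<lambda>n. (if n = 0 then 0 else of_nat n - c) * z^n)"
    by (simp add: fun_eq_iff algebra_simps)
  ultimately show ?thesis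
    by simp
qed

lemma tcoeff_kernel:
  "tcoeff (\<lambda>w. (w - c * (w - w^2)) / (1 - w)^2) n = (if n = 0 then 0 else of_nat n - c)"
proof -
  define K where "K = Abs_fps (\<lambda>n. if n = 0 then 0 else of_nat n - c)"
  have "(\<lambda>w. (w - c * (w - w^2)) / (1 - w)^2) has_fps_expansion K"
    unfolding has_fps_expansion_def
  proof
    have "summable (\<lambda>n. fps_nth K n * (1/2)^n)"
      using sums_kernel[of "1/2" c] by (auto simp: K_def sums_iff)
    then have "norm (1/2 :: complex) \<le> fps_conv_radius K"
      unfolding fps_conv_radius_def by (rule conv_radius_geI)
    then show "0 < fps_conv_radius K"
      by (rule less_le_trans[rotated]) simp
    have "eventually (\<lambda>z. z \<in> ball (0::complex) 1) (nhds 0)"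
      by (rule eventually_nhds_in_open) auto
    then show "\<forall>\<^sub>F z in nhds 0. eval_fps K z = (z - c * (z - z^2)) / (1 - z)^2"
      by eventually_elim (use sums_kernel in \<open>auto simp: K_def eval_fps_def sums_iff\<close>)
  qed
  then show ?thesis
    using fps_nth_fps_expansion[of _ K n] by (simp add: tcoeff_def K_def)
qed

lemma sums_tcoeff:
  assumes "f holomorphic_on ball 0 r" "w \<in> ball 0 r"
  shows "(\<lambda>n. tcoeff f n * w^n) sums f w"
  using holomorphic_power_series[OF assms] by (simp add: tcoeff_def)

lemma tcoeff_deriv: "tcoeff (deriv f) n = of_nat (Suc n) * tcoeff f (Suc n)"
proof -
  have "(deriv ^^ n) (deriv f) = (deriv ^^ Suc n) f"
    by (simp add: funpow_Suc_right del: funpow.simps)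
  moreover have "of_nat (Suc n) * ((deriv ^^ Suc n) f 0 / fact (Suc n)) = (deriv ^^ Suc n) f 0 / fact n"
    by (simp add: fact_Suc divide_simps del: of_nat_Suc)
  ultimately show ?thesis
    by (simp add: tcoeff_def)
qed

lemma sums_of_nat_times_tcoeff:
  assumes "f holomorphic_on ball 0 r" "w \<in> ball 0 r"
  shows "(\<lambda>n. of_nat n * tcoeff f n * w^n) sums (w * deriv f w)"
proof -
  have "deriv f holomorphic_on ball 0 r"
    using assms(1) by (rule holomorphic_deriv) simp
  from sums_tcoeff[OF this assms(2)]
  have "(\<lambda>n. w * (of_nat (Suc n) * tcoeff f (Suc n) * w^n)) sums (w * deriv f w)"
    unfolding tcoeff_deriv by (intro sums_mult) simp
  then have "(\<lambda>n. of_nat (Suc n) * tcoeff f (Suc n) * w ^ Suc n) sums (w * deriv f w)"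
    by (simp add: algebra_simps)
  then show ?thesis
    by (subst (asm) sums_Suc_iff) simp
qed

lemma hadamard_kernel:
  assumes "f holomorphic_on ball 0 1" "f 0 = 0" "w \<in> ball 0 1"
  shows "hadamard f (\<lambda>w. (w - c * (w - w^2)) / (1 - w)^2) w = w * deriv f w - c * f w"
proof -
  have "(\<lambda>n. of_nat n * tcoeff f n * w^n - c * (tcoeff f n * w^n)) sums (w * deriv f w - c * f w)"
    by (intro sums_diff sums_mult sums_of_nat_times_tcoeff[OF assms(1,3)] sums_tcoeff[OF assms(1,3)])
  moreover have "tcoeff f 0 = 0"
    using assms(2) by (simp add: tcoeff_def)
  then have "(\<lambda>n. of_nat n * tcoeff f n * w^n - c * (tcoeff f n * w^n)) =
      (\<lambda>n. tcoeff f n * tcoeff (\<lambda>w. (w - c * (w - w^2)) / (1 - w)^2) n * w^n)"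
    unfolding tcoeff_kernel by (simp add: fun_eq_iff algebra_simps)
  ultimately show ?thesis
    unfolding hadamard_def by (simp add: sums_iff)
qed

lemma holomorphic_div_z:
  assumes "f holomorphic_on S" "open S" "f 0 = 0"
  shows "div_z f holomorphic_on S"
proof -
  have "div_z f = (\<lambda>z. if z = 0 then deriv f 0 else (f z - f 0) / (z - 0))"
    using assms(3) by (simp add: div_z_def fun_eq_iff)
  then show ?thesis
    using pole_lemma_open[OF assms(1,2)] by simp
qed

lemma div_z_hadamard_kernel:
  assumes f: "f holomorphic_on ball 0 1" "f 0 = 0" and z: "z \<in> ball 0 1"
  shows "div_z (hadamard f (\<lambda>w. (w - c * (w - w^2)) / (1 - w)^2)) z = deriv f z - c * div_z f z"
proof (cases "z = 0")
  case False
  then show ?thesis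
    using hadamard_kernel[OF f z] by (simp add: div_z_def diff_divide_distrib)
next
  case True
  have "deriv f holomorphic_on ball 0 1"
    using f(1) by (rule holomorphic_deriv) simp
  then have "((\<lambda>w. w * deriv f w - c * f w) has_field_derivative deriv f 0 - c * deriv f 0) (at 0)"
    using f(1) by (auto intro!: derivative_eq_intros holomorphic_derivI[of _ "ball 0 1"])
  then have "((hadamard f (\<lambda>w. (w - c * (w - w^2)) / (1 - w)^2)) has_field_derivative
      deriv f 0 - c * deriv f 0) (at 0)"
    by (rule has_field_derivative_transform_within_open[where S = "ball 0 1"])
      (auto simp: hadamard_kernel[OF f])
  then show ?thesis
    using True by (simp add: div_z_def DERIV_imp_deriv)
qed

section \<open>Subordination and the boundary curve\<close>

lemma closedin_multiple_of_compact:
  fixes F P :: "complex \<Rightarrow> complex"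
  assumes "continuous_on S F" "continuous_on S P" "compact K"
  shows "closedin (top_of_set S) {z \<in> S. \<exists>u\<in>K. F z = u * P z}"
proof -
  have "continuous_on (K \<times> S) (\<lambda>p. F (snd p) - fst p * P (snd p))"
    by (intro continuous_intros continuous_on_compose2[OF assms(1) continuous_on_snd]
        continuous_on_compose2[OF assms(2) continuous_on_snd]) auto
  then have "closedin (top_of_set (K \<times> S)) {p \<in> K \<times> S. F (snd p) - fst p * P (snd p) = 0}"
    by (rule continuous_closedin_preimage_constant)
  from closedin_compact_projection[OF assms(3) this]
  show ?thesis
    by (rule back_subst) auto
qed

text \<open>
  The set of z with F z in P z * phi(D) is open; since F z never lies in P z * phi(circle),
  it coincides with the set of z with F z in P z * phi(closed disc), which is closed by compactness.
\<close>
lemma quotient_in_image_if_avoids_boundary_image: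
  fixes \<phi> F P :: "complex \<Rightarrow> complex"
  assumes \<phi>: "\<phi> holomorphic_on ball 0 1" "continuous_on (cball 0 1) \<phi>" "inj_on \<phi> (cball 0 1)"
    and FP: "F holomorphic_on ball 0 1" "P holomorphic_on ball 0 1" "F 0 = \<phi> 0 * P 0"
    and avoid: "\<And>z w. z \<in> ball 0 1 \<Longrightarrow> w \<in> sphere 0 1 \<Longrightarrow> F z \<noteq> \<phi> w * P z"
    and z: "z \<in> ball 0 1"
  shows "P z \<noteq> 0 \<and> F z / P z \<in> \<phi> ` ball 0 1"
proof -
  define U where "U = {z \<in> ball 0 1. \<exists>u\<in>\<phi> ` ball 0 1. F z = u * P z}"
  have cont: "continuous_on (ball 0 1) F" "continuous_on (ball 0 1) P"
    using FP by (simp_all add: holomorphic_on_imp_continuous_on)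
  have zero: "F v \<noteq> 0" if "v \<in> ball 0 1" "P v = 0" for v
    using avoid[of v 1] that by simp
  have "\<exists>u\<in>\<phi> ` ball 0 1. F v = u * P v"
    if v: "v \<in> ball 0 1" and "w \<in> cball 0 1" "F v = \<phi> w * P v" for v w
  proof -
    have "w \<notin> sphere 0 1"
      using avoid[OF v] that(3) by blast
    then have "w \<in> ball 0 1"
      using that(2) by auto
    then show ?thesis
      using that(3) by blast
  qed
  then have "U = {z \<in> ball 0 1. \<exists>u\<in>\<phi> ` cball 0 1. F z = u * P z}"
    unfolding U_def by fastforce
  also have "closedin (top_of_set (ball 0 1)) \<dots>"
    using \<phi>(2) by (intro closedin_multiple_of_compact[OF cont] compact_continuous_image) simp_all
  finally have "closedin (top_of_set (ball 0 1)) U" .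
  moreover have "openin (top_of_set (ball 0 1)) U"
  proof (rule open_subset)
    define D' where "D' = ball 0 1 \<inter> P -` (- {0})"
    have "continuous_on D' (\<lambda>z. F z / P z)"
      unfolding D'_def by (intro continuous_intros continuous_on_subset[OF cont(1)]
          continuous_on_subset[OF cont(2)]) auto
    moreover have "open D'"
      unfolding D'_def using cont(2) by (intro continuous_open_preimage) auto
    moreover have "open (\<phi> ` ball 0 1)"
      using \<phi> by (intro open_mapping_thm3) (auto intro: inj_on_subset)
    ultimately have "open (D' \<inter> (\<lambda>z. F z / P z) -` (\<phi> ` ball 0 1))"
      by (rule continuous_open_preimage)
    moreover have "U = D' \<inter> (\<lambda>z. F z / P z) -` (\<phi> ` ball 0 1)"
      using zero by (auto simp: U_def D'_def divide_eq_eq)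
    ultimately show "open U"
      by simp
  qed (auto simp: U_def)
  moreover have "0 \<in> U"
    using FP(3) by (auto simp: U_def)
  ultimately have "U = ball 0 1"
    using connected_clopen[of "ball (0::complex) 1"] connected_ball by blast
  then obtain w where w: "w \<in> ball 0 1" "F z = \<phi> w * P z"
    using z unfolding U_def by blast
  moreover from w have "P z \<noteq> 0"
    using zero z by auto
  ultimately show ?thesis
    by simp
qed

lemma avoids_boundary_image_iff_subord:
  fixes \<phi> F P :: "complex \<Rightarrow> complex"
  assumes \<phi>: "\<phi> holomorphic_on ball 0 1" "continuous_on (cball 0 1) \<phi>" "inj_on \<phi> (cball 0 1)"
    and FP: "F holomorphic_on ball 0 1" "P holomorphic_on ball 0 1" "F 0 = \<phi> 0 * P 0"
  shows "(\<forall>z\<in>ball 0 1. \<forall>w\<in>sphere 0 1. F z \<noteq> \<phi> w * P z) \<longleftrightarrow>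
    (\<forall>z\<in>ball 0 1. P z \<noteq> 0) \<and> subord (\<lambda>z. F z / P z) \<phi>"
proof
  assume "\<forall>z\<in>ball 0 1. \<forall>w\<in>sphere 0 1. F z \<noteq> \<phi> w * P z"
  then have image: "P z \<noteq> 0 \<and> F z / P z \<in> \<phi> ` ball 0 1" if "z \<in> ball 0 1" for z
    using quotient_in_image_if_avoids_boundary_image[OF \<phi> FP _ that] by blast
  obtain \<psi> where \<psi>: "\<psi> holomorphic_on \<phi> ` ball 0 1" "\<And>z. z \<in> ball 0 1 \<Longrightarrow> \<psi> (\<phi> z) = z"
  proof -
    have "inj_on \<phi> (ball 0 1)"
      using \<phi>(3) by (rule inj_on_subset) auto
    then show ?thesis
      using holomorphic_has_inverse[OF \<phi>(1) open_ball] that by metis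
  qed
  define \<omega> where "\<omega> = (\<lambda>z. \<psi> (F z / P z))"
  have "(\<lambda>z. F z / P z) holomorphic_on ball 0 1"
    using FP image by (intro holomorphic_intros) auto
  then have "(\<psi> \<circ> (\<lambda>z. F z / P z)) holomorphic_on ball 0 1"
    by (rule holomorphic_on_compose_gen[OF _ \<psi>(1)]) (use image in blast)
  then have "\<omega> holomorphic_on ball 0 1"
    by (simp add: \<omega>_def o_def)
  moreover have "\<omega> z \<in> ball 0 1" and "F z / P z = \<phi> (\<omega> z)" if "z \<in> ball 0 1" for z
    using image[OF that] \<psi>(2) by (auto simp: \<omega>_def)
  moreover have "\<omega> 0 = 0"
    using image[of 0] FP(3) \<psi>(2)[of 0] by (simp add: \<omega>_def)
  ultimately have "subord (\<lambda>z. F z / P z) \<phi>"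
    unfolding subord_def by (intro exI[of _ \<omega>]) auto
  then show "(\<forall>z\<in>ball 0 1. P z \<noteq> 0) \<and> subord (\<lambda>z. F z / P z) \<phi>"
    using image by blast
next
  assume "(\<forall>z\<in>ball 0 1. P z \<noteq> 0) \<and> subord (\<lambda>z. F z / P z) \<phi>"
  then obtain \<omega> where P: "\<And>z. z \<in> ball 0 1 \<Longrightarrow> P z \<noteq> 0"
    and \<omega>: "\<omega> ` ball 0 1 \<subseteq> ball 0 1" "\<And>z. z \<in> ball 0 1 \<Longrightarrow> F z / P z = \<phi> (\<omega> z)"
    unfolding subord_def by blast
  show "\<forall>z\<in>ball 0 1. \<forall>w\<in>sphere 0 1. F z \<noteq> \<phi> w * P z"
  proof (intro ballI notI)
    fix z w
    assume z: "z \<in> ball 0 1" and w: "w \<in> sphere 0 1" and "F z = \<phi> w * P z"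
    then have "\<phi> (\<omega> z) = \<phi> w"
      using P[OF z] \<omega>(2)[OF z] by simp
    moreover have "\<omega> z \<in> ball 0 1"
      using \<omega>(1) z by blast
    ultimately have "\<omega> z = w"
      using w by (intro inj_onD[OF \<phi>(3), of "\<omega> z" w]) auto
    then show False
      using \<open>\<omega> z \<in> ball 0 1\<close> w by auto
  qed
qed

lemma subord_cong:
  assumes "\<And>z. z \<in> ball 0 1 \<Longrightarrow> f z = g z"
  shows "subord f \<phi> \<longleftrightarrow> subord g \<phi>"
  using assms unfolding subord_def by (metis (no_types, lifting) image_subset_iff)

lemma logderiv_quot_eq:
  assumes "f 0 = 0" "deriv f 0 = 1" "div_z f z \<noteq> 0"
  shows "logderiv_quot f z = deriv f z / div_z f z"
  using assms by (auto simp: logderiv_quot_def div_z_def)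

text \<open>
  At a zero z \<noteq> 0 of f, logderiv_quot f z is 0 (division by zero), a value phi_nc omits on D.
\<close>
lemma S_star_nc_iff_subord_quotient:
  assumes "f \<in> classA"
  shows "f \<in> S_star_nc \<longleftrightarrow>
    (\<forall>z\<in>ball 0 1. div_z f z \<noteq> 0) \<and> subord (\<lambda>z. deriv f z / div_z f z) phi_nc"
proof -
  have f: "f 0 = 0" "deriv f 0 = 1"
    using assms by (simp_all add: classA_def)
  have "div_z f z \<noteq> 0" if sub: "subord (logderiv_quot f) phi_nc" and z: "z \<in> ball 0 1" for z
  proof
    assume "div_z f z = 0"
    then have "logderiv_quot f z = 0"
      using f by (auto simp: logderiv_quot_def div_z_def)
    moreover obtain \<omega> where "\<omega> z \<in> ball 0 1" "logderiv_quot f z = phi_nc (\<omega> z)"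
      using sub z unfolding subord_def by blast
    ultimately show False
      using phi_nc_nonzero by simp
  qed
  moreover have "subord (logderiv_quot f) phi_nc \<longleftrightarrow> subord (\<lambda>z. deriv f z / div_z f z) phi_nc"
    if "\<forall>z\<in>ball 0 1. div_z f z \<noteq> 0"
    using that f by (intro subord_cong) (simp add: logderiv_quot_eq)
  ultimately show ?thesis
    using assms unfolding S_star_nc_def by blast
qed

lemma unit_sphere_exp_iE:
  assumes "w \<in> sphere (0::complex) 1"
  obtains \<theta> :: real where "-pi \<le> \<theta>" "\<theta> \<le> pi" "w = exp (\<i> * of_real \<theta>)"
proof -
  have "w \<noteq> 0"
    using assms by auto
  then have "w = cis (Arg w)"
    using assms by (simp add: cis_Arg sgn_div_norm)
  then show ?thesis
    using that[of "Arg w"] Arg_bounded[of w] by (simp add: cis_conv_exp)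
qed

theorem mainTheorem14:
  fixes f :: "complex \<Rightarrow> complex"
  assumes "f \<in> classA"
  shows "f \<in> S_star_nc \<longleftrightarrow>
    (\<forall>z\<in>ball 0 1. \<forall>\<theta>::real. -pi \<le> \<theta> \<and> \<theta> \<le> pi \<longrightarrow>
       div_z (hadamard f (\<lambda>w. (w - phi_nc (exp (\<i> * of_real \<theta>)) * (w - w^2)) / (1 - w)^2)) z \<noteq> 0)"
proof -
  have f: "f holomorphic_on ball 0 1" "f 0 = 0" "deriv f 0 = 1"
    using assms by (simp_all add: classA_def)
  have "phi_nc holomorphic_on cball 0 1"
    using holomorphic_phi_nc cball_subset_ball_pi_half by (rule holomorphic_on_subset)
  then have \<phi>: "phi_nc holomorphic_on ball 0 1" "continuous_on (cball 0 1) phi_nc"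
    by (auto intro: holomorphic_on_subset holomorphic_on_imp_continuous_on)
  have "f \<in> S_star_nc \<longleftrightarrow> (\<forall>z\<in>ball 0 1. \<forall>w\<in>sphere 0 1. deriv f z \<noteq> phi_nc w * div_z f z)"
    unfolding S_star_nc_iff_subord_quotient[OF assms]
    using f by (intro avoids_boundary_image_iff_subord[symmetric] \<phi> inj_on_phi_nc holomorphic_deriv
        holomorphic_div_z) (auto simp: div_z_def)
  also have "\<dots> \<longleftrightarrow> (\<forall>z\<in>ball 0 1. \<forall>\<theta>::real. -pi \<le> \<theta> \<and> \<theta> \<le> pi \<longrightarrow>
       div_z (hadamard f (\<lambda>w. (w - phi_nc (exp (\<i> * of_real \<theta>)) * (w - w^2)) / (1 - w)^2)) z \<noteq> 0)"
    using f(1,2) by (auto simp: div_z_hadamard_kernel norm_exp_i_times elim!: unit_sphere_exp_iE)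
  finally show ?thesis .
qed

end
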